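(* Let $(A,\cdot)$ be a commutative nearly associative algebra over a field $\mathbb{K}$ of characteristic $0$. Then $(A,\cdot)$ is anti-flexible, i.e. $(x\cdot y)\cdot z-(z\cdot y)\cdot x=x\cdot(y\cdot z)-z\cdot(y\cdot x)$ for all $x,y,z\in A$ (equivalently, $a(x,y,z)=a(z,y,x)$ where $a(x,y,z)=(x\cdot y)\cdot z-x\cdot(y\cdot z)$).
   Context: An algebra $(A,\cdot)$ (linear space with bilinear product) is nearly associative if $x\cdot(y\cdot z)=(z\cdot x)\cdot y$ for all $x,y,z\in A$, and commutative if $x\cdot y=y\cdot x$ for all $x,y$. *)

theory Defs
  imports Complex_Main
begin

definition algebra_over :: "('k::field \<Rightarrow> 'v::ab_group_add \<Rightarrow> 'v) \<Rightarrow> ('v \<Rightarrow> 'v \<Rightarrow> 'v) \<Rightarrow> bool" where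
  "algebra_over scale mult \<longleftrightarrow>
     vector_space scale \<and>
     (\<forall>x. Vector_Spaces.linear scale scale (mult x)) \<and>
     (\<forall>y. Vector_Spaces.linear scale scale (\<lambda>x. mult x y))"

definition nearly_associative :: "('v \<Rightarrow> 'v \<Rightarrow> 'v) \<Rightarrow> bool" where
  "nearly_associative mult \<longleftrightarrow> (\<forall>x y z. mult x (mult y z) = mult (mult z x) y)"

definition commutative_product :: "('v \<Rightarrow> 'v \<Rightarrow> 'v) \<Rightarrow> bool" where
  "commutative_product mult \<longleftrightarrow> (\<forall>x y. mult x y = mult y x)"

definition associator :: "('v::ab_group_add \<Rightarrow> 'v \<Rightarrow> 'v) \<Rightarrow> 'v \<Rightarrow> 'v \<Rightarrow> 'v \<Rightarrow> 'v" where
  "associator mult x y z = mult (mult x y) z - mult x (mult y z)"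

definition anti_flexible :: "('v::ab_group_add \<Rightarrow> 'v \<Rightarrow> 'v) \<Rightarrow> bool" where
  "anti_flexible mult \<longleftrightarrow>
     (\<forall>x y z. mult (mult x y) z - mult (mult z y) x = mult x (mult y z) - mult z (mult y x))"

end

theory Submission
  imports Defs
begin

text \<open>Commutativity and near associativity together force associativity:
x(yz) = (zx)y = (xz)y = z(yx) = z(xy) = (xy)z. Hence the associator vanishes, and
anti-flexibility, which says that the associator is symmetric in its outer arguments,
holds trivially.\<close>

lemma anti_flexible_iff_associator_symmetric:
  fixes mult :: "'v::ab_group_add \<Rightarrow> 'v \<Rightarrow> 'v"
  shows "anti_flexible mult \<longleftrightarrow> (\<forall>x y z. associator mult x y z = associator mult z y x)"
  unfolding anti_flexible_def associator_def by (simp add: algebra_simps)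

lemma commutative_nearly_associative_imp_associative:
  assumes "commutative_product mult" and "nearly_associative mult"
  shows "mult (mult x y) z = mult x (mult y z)"
proof -
  have comm: "\<And>a b. mult a b = mult b a"
    using assms(1) unfolding commutative_product_def by blast
  have near: "\<And>a b c. mult a (mult b c) = mult (mult c a) b"
    using assms(2) unfolding nearly_associative_def by blast
  have "mult x (mult y z) = mult (mult z x) y" by (rule near)
  also have "\<dots> = mult (mult x z) y" by (simp add: comm)
  also have "\<dots> = mult z (mult y x)" by (rule near [symmetric])
  also have "\<dots> = mult (mult x y) z" by (simp add: comm)
  finally show ?thesis by (rule sym)
qed

theorem mainTheorem2:
  fixes scale :: "'k::field_char_0 \<Rightarrow> 'v::ab_group_add \<Rightarrow> 'v"
    and mult :: "'v \<Rightarrow> 'v \<Rightarrow> 'v"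
  assumes "algebra_over scale mult"
    and "commutative_product mult"
    and "nearly_associative mult"
  shows "anti_flexible mult"
proof -
  have "associator mult x y z = 0" for x y z
    using commutative_nearly_associative_imp_associative [OF assms(2,3)]
    by (simp add: associator_def)
  then show ?thesis
    by (simp add: anti_flexible_iff_associator_symmetric)
qed

end
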